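(* Let $S$ be an inverse monoid and $\mathcal M$ a finite quasi-generating set for $S$. Then the action of $S$ on the presheaf of geodesic metric spaces $(S,d_{\mathcal M})$ over $E(S)$ (with projection $s\mapsto s^{-1}s$ and action given by right multiplication) is proper and cobounded.
   Context: An inverse monoid is a monoid $S$ (identity $1$) in which every $s$ has a unique $s^{-1}$ with $ss^{-1}s=s$, $s^{-1}ss^{-1}=s^{-1}$. $E(S)$ is its set of idempotents. Green's relation $\mathcal L$: $(s,t)\in\mathcal L$ iff $s^{-1}s=t^{-1}t$. A quasi-generating set is a subset $\mathcal M=\mathcal M^{-1}\subseteq S$ such that $S$ is generated as a semigroup by $\mathcal M\cup E(S)$. The Cayley metric: $d_{\mathcal M}(s,t)=\infty$ if $(s,t)\notin\mathcal L$, and otherwise the path distance from $s$ to $t$ in the graph on the $\mathcal L$-class of $s$ with $u,v$ joined by an edge of length 1 whenever $gu=v$ for some $g\in\mathcal M$. This makes $S$ a presheaf of metric spaces over $E(S)$: projection $p(s)=s^{-1}s$, fiber over $e$ the $\mathcal L$-class $\{s: s^{-1}s=e\}$, and $S$ acts on it by right multiplication. For an inverse monoid $S$ acting (on the right) on a presheaf of metric spaces $X$ over $E(S)$ with fibers $X_e$ and extended metric $d$ (infinite between different fibers): the action is proper if for every $y_1\in X_1$ and $R\ge0$ there is a finite $\mathcal C\subseteq S$ with $\{s\in S: d(y_1\cdot s, y_1\cdot s^{-1}s)\le R\}\subseteq\{ce: c\in\mathcal C, e\in E(S)\}$; it is cobounded if there exist $x_1\in X_1$ and $T\ge0$ such that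 every point of $X$ is of the form $y\cdot s$ with $s\in S$ and $d(x_1,y)\le T$. *)

theory Defs
  imports Main "HOL-Library.Extended_Real"
begin

definition inverse_monoid :: "'a::monoid_mult itself \<Rightarrow> bool" where
  "inverse_monoid _ \<longleftrightarrow> (\<forall>s::'a. \<exists>!t. s * t * s = s \<and> t * s * t = t)"

definition minv :: "'a::monoid_mult \<Rightarrow> 'a" where
  "minv s = (THE t. s * t * s = s \<and> t * s * t = t)"

definition idems :: "'a::monoid_mult set" where
  "idems = {e. e * e = e}"

definition greenL :: "'a::monoid_mult \<Rightarrow> 'a \<Rightarrow> bool" where
  "greenL s t \<longleftrightarrow> minv s * s = minv t * t"

inductive_set sgen :: "'a::monoid_mult set \<Rightarrow> 'a set" for A where
  base: "a \<in> A \<Longrightarrow> a \<in> sgen A"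
| mult: "x \<in> sgen A \<Longrightarrow> y \<in> sgen A \<Longrightarrow> x * y \<in> sgen A"

definition quasi_generating :: "'a::monoid_mult set \<Rightarrow> bool" where
  "quasi_generating M \<longleftrightarrow> minv ` M = M \<and> sgen (M \<union> idems) = UNIV"

definition cayley_edge :: "'a::monoid_mult set \<Rightarrow> 'a \<Rightarrow> 'a \<Rightarrow> bool" where
  "cayley_edge M u v \<longleftrightarrow> (\<exists>g\<in>M. g * u = v \<or> g * v = u)"

definition cayley_path :: "'a::monoid_mult set \<Rightarrow> 'a \<Rightarrow> 'a \<Rightarrow> nat \<Rightarrow> bool" where
  "cayley_path M s t n \<longleftrightarrow> (\<exists>p::nat \<Rightarrow> 'a. p 0 = s \<and> p n = t \<and>
      (\<forall>i\<le>n. greenL s (p i)) \<and> (\<forall>i<n. cayley_edge M (p i) (p (Suc i))))"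

definition cayley_dist :: "'a::monoid_mult set \<Rightarrow> 'a \<Rightarrow> 'a \<Rightarrow> ereal" where
  "cayley_dist M s t =
     (if greenL s t \<and> (\<exists>n. cayley_path M s t n)
      then ereal (real (LEAST n. cayley_path M s t n)) else \<infinity>)"

text \<open>Actions of an inverse monoid S (a type) on a presheaf of metric spaces X over E(S),
  given by a projection p : X \<Rightarrow> E(S), a right action act, and an extended metric d
  (infinite between different fibres).\<close>
definition proper_action ::
  "('x \<Rightarrow> 'a::monoid_mult) \<Rightarrow> ('x \<Rightarrow> 'a \<Rightarrow> 'x) \<Rightarrow> ('x \<Rightarrow> 'x \<Rightarrow> ereal) \<Rightarrow> bool" where
  "proper_action p act d \<longleftrightarrow>
     (\<forall>y1 R. p y1 = 1 \<and> R \<ge> 0 \<longrightarrow>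
        (\<exists>C. finite C \<and>
          {s. d (act y1 s) (act y1 (minv s * s)) \<le> ereal R}
            \<subseteq> {c * e | c e. c \<in> C \<and> e \<in> idems}))"

definition cobounded_action ::
  "('x \<Rightarrow> 'a::monoid_mult) \<Rightarrow> ('x \<Rightarrow> 'a \<Rightarrow> 'x) \<Rightarrow> ('x \<Rightarrow> 'x \<Rightarrow> ereal) \<Rightarrow> bool" where
  "cobounded_action p act d \<longleftrightarrow>
     (\<exists>x1 T. p x1 = 1 \<and> T \<ge> 0 \<and>
        (\<forall>x. \<exists>y s. x = act y s \<and> d x1 y \<le> ereal T))"

end

theory Submission
  imports Defs "HOL-Library.Set_Algebras"
begin

text \<open>In an inverse monoid, an edge \<open>g a = b\<close> of the Cayley graph inside an \<open>\<L>\<close>-class can be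
  traversed backwards as \<open>g\<^sup>-\<^sup>1 b = a\<close>, and \<open>\<M>\<close> is closed under inverses.  Hence a path of
  length \<open>n \<le> R\<close> from \<open>y\<^sub>1 s\<close> to \<open>y\<^sub>1 s\<^sup>-\<^sup>1s\<close> yields a word \<open>w\<close> of length \<open>n\<close> in \<open>\<M>\<close> with
  \<open>y\<^sub>1 s = w y\<^sub>1 s\<^sup>-\<^sup>1s\<close>, and since \<open>y\<^sub>1\<^sup>-\<^sup>1y\<^sub>1 = 1\<close>, \<open>s = (y\<^sub>1\<^sup>-\<^sup>1 w y\<^sub>1) s\<^sup>-\<^sup>1s\<close>.  The finitely many
  elements \<open>y\<^sub>1\<^sup>-\<^sup>1 w y\<^sub>1\<close> witness properness.  Coboundedness is trivial: \<open>x = 1 \<cdot> x\<close>.\<close>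

context
  assumes inverse_monoid: "inverse_monoid TYPE('a::monoid_mult)"
begin

lemma minv_unique_ex: "\<exists>!t. s * t * s = s \<and> t * s * t = (t::'a)"
  using inverse_monoid unfolding inverse_monoid_def by blast

lemma mult_minv_mult [simp]: "(s::'a) * minv s * s = s"
  and minv_mult_minv [simp]: "minv s * s * minv s = minv (s::'a)"
  using theI'[OF minv_unique_ex[of s]] unfolding minv_def by auto

lemma minv_eqI: "(s::'a) * t * s = s \<Longrightarrow> t * s * t = t \<Longrightarrow> minv s = t"
  unfolding minv_def using minv_unique_ex by (simp add: the1_equality)

lemma minv_idem: "(e::'a) * e = e \<Longrightarrow> minv e = e"
  by (rule minv_eqI) simp_all

lemma minv_mult_self_idem: "(minv s * s) * (minv s * s) = minv s * (s::'a)"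
  and mult_minv_self_idem: "(s * minv s) * (s * minv s) = s * minv (s::'a)"
  by (simp_all flip: mult.assoc)

lemma idem_mult_idem:
  assumes e: "(e::'a) * e = e" and f: "f * f = f"
  shows "(e * f) * (e * f) = e * f"
proof -
  have ee: "e * (e * z) = e * z" and ff: "f * (f * z) = f * z" for z
    using e f by (simp_all flip: mult.assoc)
  define x where "x = minv (e * f)"
  have x1: "(e * f) * x * (e * f) = e * f" and x2: "x * (e * f) * x = x"
    unfolding x_def by simp_all
  text \<open>\<open>f x e\<close> is also an inverse of \<open>e f\<close>, so \<open>x = f x e\<close>, which makes \<open>x\<close> idempotent.\<close>
  have "minv (e * f) = f * x * e"
  proof (rule minv_eqI)
    show "e * f * (f * x * e) * (e * f) = e * f"
      using x1 by (simp add: mult.assoc ee ff)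
    have "f * x * e * (e * f) * (f * x * e) = f * (x * (e * f) * x) * e"
      by (simp add: mult.assoc ee ff)
    then show "f * x * e * (e * f) * (f * x * e) = f * x * e"
      using x2 by simp
  qed
  then have x_eq: "x = f * x * e"
    unfolding x_def .
  have "x * x = f * (x * (e * f) * x) * e"
    using x_eq by (metis mult.assoc)
  also have "\<dots> = x"
    using x2 x_eq by (simp add: mult.assoc)
  finally have idem_x: "x * x = x" .
  then have "minv x = x"
    by (rule minv_idem)
  moreover have "minv x = e * f"
    using x1 x2 by (intro minv_eqI) (simp_all add: mult.assoc)
  ultimately show ?thesis
    using idem_x by simp
qed

lemma idem_commute:
  assumes e: "(e::'a) * e = e" and f: "f * f = f"
  shows "e * f = f * e"
proof -
  have ee: "e * (e * z) = e * z" and ff: "f * (f * z) = f * z" for z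
    using e f by (simp_all flip: mult.assoc)
  have "minv (e * f) = e * f"
    using idem_mult_idem[OF e f] by (rule minv_idem)
  moreover have "minv (e * f) = f * e"
    using idem_mult_idem[OF e f] idem_mult_idem[OF f e]
    by (intro minv_eqI) (simp_all add: mult.assoc ee ff)
  ultimately show ?thesis
    by simp
qed

lemma minv_mult: "minv ((a::'a) * b) = minv b * minv a"
proof (rule minv_eqI)
  have comm: "(b * minv b) * (minv a * a) = (minv a * a) * (b * minv b)"
    using idem_commute minv_mult_self_idem mult_minv_self_idem by blast
  have "a * b * (minv b * minv a) * (a * b) = a * ((b * minv b) * (minv a * a)) * b"
    by (simp add: mult.assoc)
  also have "\<dots> = (a * minv a * a) * (b * minv b * b)"
    using comm by (simp add: mult.assoc)
  finally show "a * b * (minv b * minv a) * (a * b) = a * b"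
    by simp
  have "minv b * minv a * (a * b) * (minv b * minv a)
      = minv b * ((minv a * a) * (b * minv b)) * minv a"
    by (simp add: mult.assoc)
  also have "\<dots> = minv b * ((b * minv b) * (minv a * a)) * minv a"
    by (simp only: comm)
  also have "\<dots> = (minv b * b * minv b) * (minv a * a * minv a)"
    by (simp add: mult.assoc)
  finally show "minv b * minv a * (a * b) * (minv b * minv a) = minv b * minv a"
    by simp
qed

lemma greenL_left_mult_cancel:
  assumes gab: "(g::'a) * a = b" and L: "greenL a b"
  shows "minv g * b = a"
proof -
  define f where "f = minv g * g"
  have comm: "(a * minv a) * f = f * (a * minv a)"
    unfolding f_def using idem_commute minv_mult_self_idem mult_minv_self_idem by blast
  have "a = a * minv a * a"
    by simp
  also have "\<dots> = a * (minv b * b)"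
    using L unfolding greenL_def by (simp add: mult.assoc)
  also have "\<dots> = (a * minv a) * f * a"
    by (simp add: gab[symmetric] minv_mult f_def mult.assoc)
  also have "\<dots> = f * (a * minv a * a)"
    using comm by (simp add: mult.assoc)
  finally have "a = f * a"
    by simp
  then show ?thesis
    using gab by (simp add: f_def mult.assoc)
qed

end

lemma greenL_sym: "greenL s t \<Longrightarrow> greenL t s"
  and greenL_trans: "greenL s t \<Longrightarrow> greenL t u \<Longrightarrow> greenL s u"
  unfolding greenL_def by simp_all

lemma cayley_edge_left_factor:
  assumes "inverse_monoid TYPE('a::monoid_mult)" and "minv ` M \<subseteq> M"
    and "cayley_edge M u v" and "greenL u (v::'a)"
  shows "\<exists>g\<in>M. u = g * v"
proof -
  obtain g where "g \<in> M" and "g * u = v \<or> g * v = u"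
    using assms(3) unfolding cayley_edge_def by blast
  then consider "g * v = u" | "minv g * v = u"
    using greenL_left_mult_cancel[OF assms(1) _ assms(4)] by blast
  then show ?thesis
    using \<open>g \<in> M\<close> assms(2) by cases force+
qed

lemma cayley_path_left_factor:
  assumes "inverse_monoid TYPE('a::monoid_mult)" and "minv ` M \<subseteq> M"
    and "cayley_path M u (v::'a) n"
  shows "\<exists>w\<in>M ^ n. u = w * v"
proof -
  obtain p where p0: "p 0 = u" and pn: "p n = v" and L: "\<forall>i\<le>n. greenL u (p i)"
    and E: "\<forall>i<n. cayley_edge M (p i) (p (Suc i))"
    using assms(3) unfolding cayley_path_def by blast
  have "\<exists>w\<in>M ^ i. u = w * p i" if "i \<le> n" for i
    using that
  proof (induction i)
    case 0
    then show ?case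
      using p0 by simp
  next
    case (Suc i)
    then obtain w where w: "w \<in> M ^ i" "u = w * p i"
      by auto
    have "greenL (p i) (p (Suc i))"
      using L Suc.prems by (meson Suc_leD greenL_sym greenL_trans)
    moreover have "cayley_edge M (p i) (p (Suc i))"
      using E Suc.prems by simp
    ultimately obtain g where "g \<in> M" "p i = g * p (Suc i)"
      using cayley_edge_left_factor[OF assms(1,2)] by blast
    then have "w * g \<in> M ^ Suc i" "u = (w * g) * p (Suc i)"
      using w unfolding power_Suc2 by (auto simp: mult.assoc)
    then show ?case
      by blast
  qed
  then show ?thesis
    using pn by blast
qed

lemma cayley_dist_le_left_factor:
  assumes "inverse_monoid TYPE('a::monoid_mult)" and "minv ` M \<subseteq> M"
    and "cayley_dist M u (v::'a) \<le> ereal (real N)"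
  shows "\<exists>k\<le>N. \<exists>w\<in>M ^ k. u = w * v"
proof -
  have ex: "\<exists>n. cayley_path M u v n"
    using assms(3) unfolding cayley_dist_def by (auto split: if_splits)
  define n where "n = (LEAST n. cayley_path M u v n)"
  have "cayley_path M u v n"
    unfolding n_def using ex by (rule LeastI_ex)
  moreover have "n \<le> N"
    using assms(3) ex unfolding cayley_dist_def n_def by (auto split: if_splits)
  ultimately show ?thesis
    using cayley_path_left_factor[OF assms(1,2)] by blast
qed

lemma cayley_dist_self: "cayley_dist M s s = 0"
proof -
  have path: "cayley_path M s s 0"
    unfolding cayley_path_def greenL_def by (rule exI[of _ "\<lambda>_. s"]) simp
  then have "(LEAST n. cayley_path M s s n) = 0"
    by (simp add: Least_eq_0)
  with path show ?thesis
    unfolding cayley_dist_def greenL_def by (auto simp: zero_ereal_def)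
qed

lemma finite_set_power: "finite M \<Longrightarrow> finite (M ^ k)" for M :: "'a::monoid_mult set"
  by (induction k) (simp_all add: finite_set_times)

lemma proper_action_cayley_dist:
  assumes IM: "inverse_monoid TYPE('a::monoid_mult)" and "finite M" and "minv ` M \<subseteq> M"
  shows "proper_action (\<lambda>s::'a. minv s * s) (\<lambda>y s. y * s) (cayley_dist M)"
  unfolding proper_action_def
proof (intro allI impI)
  fix y1 :: 'a and R :: real
  assume y1R: "minv y1 * y1 = 1 \<and> 0 \<le> R"
  define C where "C = (\<lambda>w. minv y1 * w * y1) ` (\<Union>k\<le>nat \<lceil>R\<rceil>. M ^ k)"
  have "finite C"
    unfolding C_def using finite_set_power[OF assms(2)] by blast
  moreover have "s \<in> {c * e |c e. c \<in> C \<and> e \<in> idems}"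
    if "cayley_dist M (y1 * s) (y1 * (minv s * s)) \<le> ereal R" for s
  proof -
    have "ereal R \<le> ereal (real (nat \<lceil>R\<rceil>))"
      by simp linarith
    with that have "cayley_dist M (y1 * s) (y1 * (minv s * s)) \<le> ereal (real (nat \<lceil>R\<rceil>))"
      by (rule order.trans)
    then obtain k w where "k \<le> nat \<lceil>R\<rceil>" "w \<in> M ^ k" "y1 * s = w * (y1 * (minv s * s))"
      using cayley_dist_le_left_factor[OF IM assms(3)] by blast
    moreover have "s = minv y1 * (y1 * s)"
      using y1R by (simp flip: mult.assoc)
    ultimately have "minv y1 * w * y1 \<in> C" "s = (minv y1 * w * y1) * (minv s * s)"
      unfolding C_def by (auto simp: mult.assoc)
    then show ?thesis
      using minv_mult_self_idem[OF IM] unfolding idems_def by blast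
  qed
  ultimately show "\<exists>C. finite C \<and> {s. cayley_dist M (y1 * s) (y1 * (minv s * s)) \<le> ereal R}
      \<subseteq> {c * e |c e. c \<in> C \<and> e \<in> idems}"
    by blast
qed

lemma cobounded_action_cayley_dist:
  assumes "inverse_monoid TYPE('a::monoid_mult)"
  shows "cobounded_action (\<lambda>s::'a. minv s * s) (\<lambda>y s. y * s) (cayley_dist M)"
proof -
  have "\<forall>x::'a. x = 1 * x \<and> cayley_dist M 1 1 \<le> ereal 0"
    by (simp add: cayley_dist_self zero_ereal_def)
  moreover have "minv 1 * 1 = (1::'a)"
    using minv_idem[OF assms, of 1] by simp
  ultimately show ?thesis
    unfolding cobounded_action_def by blast
qed

theorem lemma2p3:
  fixes M :: "'a::monoid_mult set"
  assumes "inverse_monoid TYPE('a)"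
    and "finite M"
    and "quasi_generating M"
  shows "proper_action (\<lambda>s::'a. minv s * s) (\<lambda>y s. y * s) (cayley_dist M)
       \<and> cobounded_action (\<lambda>s::'a. minv s * s) (\<lambda>y s. y * s) (cayley_dist M)"
proof
  have "minv ` M \<subseteq> M"
    using assms(3) unfolding quasi_generating_def by simp
  then show "proper_action (\<lambda>s::'a. minv s * s) (\<lambda>y s. y * s) (cayley_dist M)"
    using proper_action_cayley_dist assms(1,2) by blast
  show "cobounded_action (\<lambda>s::'a. minv s * s) (\<lambda>y s. y * s) (cayley_dist M)"
    using cobounded_action_cayley_dist assms(1) by blast
qed

end
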